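(* Let $H$ be a hexagonal system with a perfect matching. Suppose $\mathcal{D}=\{D_1,\ldots,D_k\}$ is a set of elementary edge cuts of $H$ such that every nice cycle of $H$ has at least one edge in common with some $D_i\in\mathcal{D}$. Then $D=\bigcup_{i=1}^{k}D_i$ is a complete forcing set of $H$.
   Context: A hexagonal system (HS) is a finite 2-connected plane graph in which every interior face is a regular hexagon of the hexagonal lattice; its vertices are properly colored black and white. A cycle $C$ of a graph $G$ with a perfect matching is nice if $G-V(C)$ has a perfect matching. For a partition $\{V_1,V_2\}$ of $V(H)$, the set $D$ of edges with one end in $V_1$ and the other in $V_2$ is an edge cut; $D$ is an elementary edge cut (e-cut) if $H-D$ has exactly two components and every edge of $D$ joins a black vertex of one of these components to a white vertex of the other. For a perfect matching $M$ of $G$, a forcing set of $M$ is a subset of $M$ contained in no other perfect matching of $G$. A complete forcing set of $G$ is a set $S\subseteq E(G)$ such that for every perfect matching $M$ of $G$, $S\cap M$ is a forcing set of $M$. *)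

theory Defs
  imports Main
begin

definition perfect_matching :: "'a set \<Rightarrow> 'a set set \<Rightarrow> 'a set set \<Rightarrow> bool" where
  "perfect_matching V E M \<longleftrightarrow> M \<subseteq> E \<and> (\<forall>v\<in>V. \<exists>!e. e \<in> M \<and> v \<in> e)"

definition is_cycle :: "'a set \<Rightarrow> 'a set set \<Rightarrow> 'a list \<Rightarrow> bool" where
  "is_cycle V E vs \<longleftrightarrow> length vs \<ge> 3 \<and> distinct vs \<and> set vs \<subseteq> V \<and>
     (\<forall>i < length vs. {vs ! i, vs ! ((i + 1) mod length vs)} \<in> E)"

definition cycle_edges :: "'a list \<Rightarrow> 'a set set" where
  "cycle_edges vs = {{vs ! i, vs ! ((i + 1) mod length vs)} | i. i < length vs}"

definition nice_cycle :: "'a set \<Rightarrow> 'a set set \<Rightarrow> 'a list \<Rightarrow> bool" where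
  "nice_cycle V E vs \<longleftrightarrow> is_cycle V E vs \<and>
     (\<exists>M. perfect_matching (V - set vs) {e \<in> E. e \<inter> set vs = {}} M)"

definition reach :: "'a set set \<Rightarrow> 'a \<Rightarrow> 'a \<Rightarrow> bool" where
  "reach F = (\<lambda>u v. {u, v} \<in> F)\<^sup>*\<^sup>*"

definition components :: "'a set \<Rightarrow> 'a set set \<Rightarrow> 'a set set" where
  "components V F = {{v \<in> V. reach F u v} | u. u \<in> V}"

definition e_cut :: "('a \<Rightarrow> bool) \<Rightarrow> 'a set \<Rightarrow> 'a set set \<Rightarrow> 'a set set \<Rightarrow> bool" where
  "e_cut blk V E D \<longleftrightarrow> (\<exists>V1 V2. V1 \<union> V2 = V \<and> V1 \<inter> V2 = {} \<and> V1 \<noteq> {} \<and> V2 \<noteq> {} \<and>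
     D = {e \<in> E. e \<inter> V1 \<noteq> {} \<and> e \<inter> V2 \<noteq> {}} \<and>
     card (components V (E - D)) = 2 \<and>
     (\<forall>e\<in>D. \<exists>b w. e = {b, w} \<and> b \<in> V1 \<and> w \<in> V2 \<and> blk b \<and> \<not> blk w))"

definition forcing_set :: "'a set \<Rightarrow> 'a set set \<Rightarrow> 'a set set \<Rightarrow> 'a set set \<Rightarrow> bool" where
  "forcing_set V E M S \<longleftrightarrow> S \<subseteq> M \<and>
     (\<forall>M'. perfect_matching V E M' \<and> S \<subseteq> M' \<longrightarrow> M' = M)"

definition complete_forcing_set :: "'a set \<Rightarrow> 'a set set \<Rightarrow> 'a set set \<Rightarrow> bool" where
  "complete_forcing_set V E S \<longleftrightarrow> S \<subseteq> E \<and>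
     (\<forall>M. perfect_matching V E M \<longrightarrow> forcing_set V E M (S \<inter> M))"

text \<open>This graph is isomorphic (as a plane graph)
  to the hexagonal lattice.\<close>

definition hex_edges :: "(int \<times> int) set set" where
  "hex_edges = {{(x, y), (x + 1, y)} | x y. True} \<union>
               {{(x, y), (x, y + 1)} | x y. even (x + y)}"

definition black :: "int \<times> int \<Rightarrow> bool" where
  "black v = even (fst v + snd v)"

text \<open>Hexagonal cells are indexed by their lower-left corner (a,b) with a+b even.\<close>
definition cell_verts :: "int \<times> int \<Rightarrow> (int \<times> int) set" where
  "cell_verts c = (case c of (a, b) \<Rightarrow>
     {(a, b), (a + 1, b), (a + 2, b), (a, b + 1), (a + 1, b + 1), (a + 2, b + 1)})"

definition cell_edges :: "int \<times> int \<Rightarrow> (int \<times> int) set set" where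
  "cell_edges c = (case c of (a, b) \<Rightarrow>
     {{(a, b), (a + 1, b)}, {(a + 1, b), (a + 2, b)},
      {(a, b + 1), (a + 1, b + 1)}, {(a + 1, b + 1), (a + 2, b + 1)},
      {(a, b), (a, b + 1)}, {(a + 2, b), (a + 2, b + 1)}})"

text \<open>A cell lies inside a lattice cycle iff the horizontal ray from its centre
  (a+1, b+1/2) to the right crosses the cycle an odd number of times.\<close>
definition cell_inside :: "(int \<times> int) list \<Rightarrow> int \<times> int \<Rightarrow> bool" where
  "cell_inside vs c = (case c of (a, b) \<Rightarrow> even (a + b) \<and>
     odd (card {a'. a' > a + 1 \<and> {(a', b), (a', b + 1)} \<in> cycle_edges vs}))"

text \<open>A hexagonal system: the subgraph of the hexagonal lattice consisting of a lattice
  cycle (its boundary) together with everything in its interior, i.e. the union of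
  the hexagonal cells inside the cycle.\<close>
definition hexagonal_system :: "(int \<times> int) set \<Rightarrow> (int \<times> int) set set \<Rightarrow> bool" where
  "hexagonal_system V E \<longleftrightarrow> (\<exists>vs. is_cycle UNIV hex_edges vs \<and>
     V = \<Union> (cell_verts ` {c. cell_inside vs c}) \<and>
     E = \<Union> (cell_edges ` {c. cell_inside vs c}))"

end

theory Submission
  imports Defs
begin

(* If two perfect matchings M and M' agree on the edges of the cuts D_i but differ, then
  following M and M' alternately from the black end of an edge of M - M' traces a cycle C whose
  vertices are matched by M among themselves. So C is nice and meets some e-cut D_i, with black
  shore V1 and white shore V2. Along C the M-edges are exactly the steps leaving a black vertex,
  so a step from V1 into V2 is an edge of D_i and of M but not of M'.
  The walk closes up because a hexagonal system is finite: a cell far to the left of the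
  boundary cycle would see all crossings of its row with that cycle, which are even in number. *)

section \<open>Perfect matchings of bipartite graphs\<close>

definition bipartite_colouring :: "('a \<Rightarrow> bool) \<Rightarrow> 'a set \<Rightarrow> 'a set set \<Rightarrow> bool" where
  "bipartite_colouring blk V E \<longleftrightarrow>
     (\<forall>e\<in>E. \<exists>u w. e = {u, w} \<and> u \<in> V \<and> w \<in> V \<and> blk u \<noteq> blk w)"

lemma perfect_matching_subset: "perfect_matching V E M \<Longrightarrow> M \<subseteq> E"
  unfolding perfect_matching_def by simp

lemma perfect_matching_edge_exists:
  assumes "perfect_matching V E M" "v \<in> V"
  obtains e where "e \<in> M" "v \<in> e"
  using assms unfolding perfect_matching_def by metis

lemma perfect_matching_edge_unique:
  assumes "perfect_matching V E M" "v \<in> V" "e \<in> M" "v \<in> e" "e' \<in> M" "v \<in> e'"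
  shows "e = e'"
  using assms unfolding perfect_matching_def by metis

lemma perfect_matching_partner_unique:
  assumes "perfect_matching V E M" "v \<in> V" "{v, u} \<in> M" "{v, u'} \<in> M"
  shows "u = u'"
proof -
  have "{v, u} = {v, u'}"
    using perfect_matching_edge_unique[OF assms(1,2,3) _ assms(4)] by simp
  then show ?thesis by (auto simp: doubleton_eq_iff)
qed

lemma perfect_matching_partner:
  assumes "perfect_matching V E M" "bipartite_colouring blk V E" "v \<in> V"
  obtains u where "{v, u} \<in> M" "u \<in> V" "blk u \<noteq> blk v"
proof -
  obtain e where e: "e \<in> M" "v \<in> e"
    using perfect_matching_edge_exists[OF assms(1,3)] .
  then obtain x y where "e = {x, y}" "x \<in> V" "y \<in> V" "blk x \<noteq> blk y"
    using perfect_matching_subset[OF assms(1)] assms(2) unfolding bipartite_colouring_def by blast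
  with e that show ?thesis
    by (metis empty_iff insert_commute insert_iff)
qed

text \<open>Off V the mate is the identity; this makes \<open>mate M\<close> an involution of the whole type.\<close>
definition mate :: "'a set set \<Rightarrow> 'a \<Rightarrow> 'a" where
  "mate M v = (if \<exists>u. {v, u} \<in> M then THE u. {v, u} \<in> M else v)"

context
  fixes blk V E M
  assumes matching: "perfect_matching V E M" and bipartite: "bipartite_colouring blk V E"
begin

lemma mate_eqI:
  assumes "v \<in> V" "{v, u} \<in> M"
  shows "mate M v = u"
  using assms perfect_matching_partner_unique[OF matching assms(1)]
  unfolding mate_def by (auto intro: the_equality)

lemma mate_edge:
  assumes "v \<in> V"
  shows "{v, mate M v} \<in> M" "mate M v \<in> V" "blk (mate M v) \<noteq> blk v"
  using perfect_matching_partner[OF matching bipartite assms] mate_eqI[OF assms] by metis+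

lemma mate_outside:
  assumes "v \<notin> V"
  shows "mate M v = v"
proof -
  have "{v, u} \<notin> M" for u
  proof
    assume "{v, u} \<in> M"
    then obtain x y where "{v, u} = {x, y}" "x \<in> V" "y \<in> V"
      using perfect_matching_subset[OF matching] bipartite unfolding bipartite_colouring_def by blast
    then show False
      using assms by (auto simp: doubleton_eq_iff)
  qed
  then show ?thesis unfolding mate_def by simp
qed

lemma mate_mate [simp]: "mate M (mate M v) = v"
proof (cases "v \<in> V")
  case True
  then show ?thesis
    using mate_edge[OF True] by (metis insert_commute mate_eqI)
qed (simp add: mate_outside)

lemma inj_mate: "inj (mate M)"
  by (rule inj_on_inverseI[where g = "mate M"]) simp

end

lemma perfect_matching_subset_eq:
  assumes "perfect_matching V E M" "perfect_matching V E M'" "bipartite_colouring blk V E"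
    and "M \<subseteq> M'"
  shows "M = M'"
proof
  show "M' \<subseteq> M"
  proof
    fix e assume e: "e \<in> M'"
    then obtain u w where uw: "e = {u, w}" "u \<in> V"
      using perfect_matching_subset[OF assms(2)] assms(3) unfolding bipartite_colouring_def by blast
    have "{u, mate M u} \<in> M'"
      using assms(4) mate_edge(1)[OF assms(1,3) uw(2)] by blast
    then have "e = {u, mate M u}"
      using perfect_matching_edge_unique[OF assms(2) uw(2) e] uw(1) by blast
    then show "e \<in> M"
      using mate_edge(1)[OF assms(1,3) uw(2)] by simp
  qed
qed (rule assms(4))

section \<open>Cycles\<close>

definition cycle_edge :: "'a list \<Rightarrow> nat \<Rightarrow> 'a set" where
  "cycle_edge vs i = {vs ! i, vs ! ((i + 1) mod length vs)}"

lemma is_cycle_iff: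
  "is_cycle V E vs \<longleftrightarrow> 3 \<le> length vs \<and> distinct vs \<and> set vs \<subseteq> V \<and>
     (\<forall>i < length vs. cycle_edge vs i \<in> E)"
  unfolding is_cycle_def cycle_edge_def ..

lemma cycle_edges_eq: "cycle_edges vs = cycle_edge vs ` {..<length vs}"
  unfolding cycle_edges_def cycle_edge_def by auto

lemma cycle_edge_subset:
  assumes "i < length vs"
  shows "cycle_edge vs i \<subseteq> set vs"
proof -
  have "(i + 1) mod length vs < length vs"
    using assms by (intro mod_less_divisor) linarith
  then show ?thesis
    using assms unfolding cycle_edge_def by simp
qed

lemma cycle_edges_subset: "e \<in> cycle_edges vs \<Longrightarrow> e \<subseteq> set vs"
  unfolding cycle_edges_eq using cycle_edge_subset by blast

lemma cycle_edge_map_upt: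
  assumes "i < n" "g n = g 0"
  shows "cycle_edge (map g [0..<n]) i = {g i, g (Suc i)}"
  using assms by (cases "Suc i = n") (auto simp: cycle_edge_def)

lemma odd_card_changes_iff:
  fixes f :: "nat \<Rightarrow> bool"
  shows "odd (card {i. i < m \<and> f i \<noteq> f (Suc i)}) \<longleftrightarrow> f 0 \<noteq> f m"
proof (induction m)
  case (Suc m)
  have "{i. i < Suc m \<and> f i \<noteq> f (Suc i)} =
      (if f m \<noteq> f (Suc m) then insert m else id) {i. i < m \<and> f i \<noteq> f (Suc i)}"
    by (auto simp: less_Suc_eq)
  then show ?case
    using Suc.IH by auto
qed simp

lemma even_card_cyclic_true_false_steps:
  fixes f :: "nat \<Rightarrow> bool"
  assumes "0 < n"
  shows "even (card {i. i < n \<and> f i \<noteq> f ((i + 1) mod n)})"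
proof -
  obtain m where n: "n = Suc m"
    using assms gr0_implies_Suc by blast
  have "(i + 1) mod n = (if i = m then 0 else Suc i)" if "i < n" for i
    using that by (auto simp: n)
  then have "{i. i < n \<and> f i \<noteq> f ((i + 1) mod n)} =
      (if f m \<noteq> f 0 then insert m else id) {i. i < m \<and> f i \<noteq> f (Suc i)}"
    by (auto simp: n less_Suc_eq)
  then show ?thesis
    using odd_card_changes_iff[of m f] by auto
qed

lemma cycle_edge_inj:
  assumes distinct: "distinct vs" and long: "3 \<le> length vs"
  shows "inj_on (cycle_edge vs) {..<length vs}"
proof (rule inj_onI)
  let ?n = "length vs"
  fix i j assume i: "i \<in> {..<?n}" and j: "j \<in> {..<?n}" and eq: "cycle_edge vs i = cycle_edge vs j"
  have next_lt: "(k + 1) mod ?n < ?n" for k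
    using long by (intro mod_less_divisor) linarith
  show "i = j"
  proof (rule ccontr)
    assume "i \<noteq> j"
    then have "vs ! i \<noteq> vs ! j"
      using distinct i j by (simp add: nth_eq_iff_index_eq)
    then have "vs ! i = vs ! ((j + 1) mod ?n)" "vs ! ((i + 1) mod ?n) = vs ! j"
      using eq unfolding cycle_edge_def by (auto simp: doubleton_eq_iff)
    then have "i = (j + 1) mod ?n" "j = (i + 1) mod ?n"
      using distinct i j next_lt by (simp_all add: nth_eq_iff_index_eq)
    then have "i = ((i + 1) mod ?n + 1) mod ?n"
      by metis
    then have "i = (i + 2) mod ?n"
      by (simp add: mod_Suc_eq)
    then show False
      using i long by (cases "i + 2 < ?n") (auto simp: mod_if split: if_splits)
  qed
qed

lemma cyclic_true_false_step:
  fixes f :: "nat \<Rightarrow> bool"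
  assumes "a < n" "f a" "b < n" "\<not> f b"
  obtains i where "i < n" "f i" "\<not> f ((i + 1) mod n)"
proof -
  have "\<exists>i<n. f i \<and> \<not> f ((i + 1) mod n)"
  proof (rule ccontr)
    assume "\<not> ?thesis"
    then have step: "f ((i + 1) mod n)" if "f i" "i < n" for i
      using that by blast
    have "f ((a + m) mod n)" for m
    proof (induction m)
      case (Suc m)
      then show ?case
        using step[of "(a + m) mod n"] assms(1) by (simp add: mod_Suc_eq)
    qed (use assms(1,2) in simp)
    from this[of "n - a + b"] show False
      using assms by simp
  qed
  then show ?thesis
    using that by blast
qed

lemma cycle_crosses_cut:
  assumes cycle: "is_cycle V E vs" and "V1 \<union> V2 = V" "V1 \<inter> V2 = {}"
    and "cycle_edges vs \<inter> {e \<in> E. e \<inter> V1 \<noteq> {} \<and> e \<inter> V2 \<noteq> {}} \<noteq> {}"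
  obtains i where "i < length vs" "vs ! i \<in> V1" "vs ! ((i + 1) mod length vs) \<in> V2"
proof -
  obtain j where j: "j < length vs" "cycle_edge vs j \<inter> V1 \<noteq> {}" "cycle_edge vs j \<inter> V2 \<noteq> {}"
    using assms(4) unfolding cycle_edges_eq by blast
  then obtain x y where "x \<in> set vs" "x \<in> V1" "y \<in> set vs" "y \<in> V2"
    using cycle_edge_subset[OF j(1)] by blast
  then obtain a b where "a < length vs" "vs ! a \<in> V1" "b < length vs" "vs ! b \<in> V2"
    by (auto simp: in_set_conv_nth)
  then obtain i where i: "i < length vs" "vs ! i \<in> V1" "vs ! ((i + 1) mod length vs) \<notin> V1"
    using cyclic_true_false_step[of a "length vs" "\<lambda>i. vs ! i \<in> V1" b] assms(3) by blast
  moreover have "vs ! ((i + 1) mod length vs) \<in> V"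
    using cycle cycle_edge_subset[OF i(1)] unfolding is_cycle_iff cycle_edge_def by blast
  ultimately show ?thesis
    using that assms(2) by blast
qed

section \<open>Alternating cycles\<close>

definition alternating_cycle ::
    "'a set \<Rightarrow> 'a set set \<Rightarrow> 'a set set \<Rightarrow> 'a set set \<Rightarrow> 'a list \<Rightarrow> bool" where
  "alternating_cycle V E M M' vs \<longleftrightarrow> is_cycle V E vs \<and>
     (\<forall>i < length vs. cycle_edge vs i \<in> (if even i then M - M' else M'))"

lemma nice_cycleI:
  assumes matching: "perfect_matching V E M" and cycle: "is_cycle V E vs"
    and covered: "\<And>v. v \<in> set vs \<Longrightarrow> \<exists>e\<in>M. v \<in> e \<and> e \<subseteq> set vs"
  shows "nice_cycle V E vs"
proof -
  have VC: "set vs \<subseteq> V"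
    using cycle unfolding is_cycle_iff by blast
  have disjoint: "e \<inter> set vs = {}" if "e \<in> M" "v \<in> e" "v \<notin> set vs" for e v
  proof (rule ccontr)
    assume "e \<inter> set vs \<noteq> {}"
    then obtain w where w: "w \<in> e" "w \<in> set vs" by blast
    then obtain e' where "e' \<in> M" "w \<in> e'" "e' \<subseteq> set vs"
      using covered by blast
    then have "e = e'"
      using perfect_matching_edge_unique[OF matching _ that(1) w(1)] w(2) VC by blast
    then show False
      using that \<open>e' \<subseteq> set vs\<close> by blast
  qed
  have "perfect_matching (V - set vs) {e \<in> E. e \<inter> set vs = {}} {e \<in> M. e \<inter> set vs = {}}"
    unfolding perfect_matching_def
  proof (intro conjI ballI)
    show "{e \<in> M. e \<inter> set vs = {}} \<subseteq> {e \<in> E. e \<inter> set vs = {}}"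
      using perfect_matching_subset[OF matching] by blast
  next
    fix v assume v: "v \<in> V - set vs"
    obtain e where e: "e \<in> M" "v \<in> e"
      using perfect_matching_edge_exists[OF matching] v by blast
    show "\<exists>!e. e \<in> {e \<in> M. e \<inter> set vs = {}} \<and> v \<in> e"
    proof (rule ex1I)
      show "e \<in> {e \<in> M. e \<inter> set vs = {}} \<and> v \<in> e"
        using disjoint e v by blast
    qed (use e v perfect_matching_edge_unique[OF matching] in blast)
  qed
  then show ?thesis
    unfolding nice_cycle_def using cycle by blast
qed

lemma alternating_cycle_nice:
  assumes matching: "perfect_matching V E M" and alternating: "alternating_cycle V E M M' vs"
  shows "nice_cycle V E vs"
  using matching
proof (rule nice_cycleI)
  show cycle: "is_cycle V E vs"
    using alternating unfolding alternating_cycle_def by blast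
  fix v assume "v \<in> set vs"
  then obtain i where i: "i < length vs" "v = vs ! i"
    by (auto simp: in_set_conv_nth)
  define j where "j = (if even i then i else i - 1)"
  have j: "j < length vs" "even j" "v \<in> cycle_edge vs j"
    using i unfolding j_def cycle_edge_def by auto
  then show "\<exists>e\<in>M. v \<in> e \<and> e \<subseteq> set vs"
    using alternating cycle_edge_subset[OF j(1)] unfolding alternating_cycle_def
    by (metis DiffD1)
qed

lemma inj_funpow_period:
  assumes "inj f" "finite (range (\<lambda>n. (f ^^ n) x))"
  obtains k where "0 < k" "(f ^^ k) x = x" "inj_on (\<lambda>i. (f ^^ i) x) {..<k}"
proof -
  have "finite {y. \<exists>n. y = (f ^^ n) x}"
    using assms(2) by (simp add: full_SetCompr_eq)
  then have "\<exists>k. 0 < k \<and> (f ^^ k) x = x"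
    using funpow_inj_finite[OF assms(1)] by metis
  define k where "k = (LEAST k. 0 < k \<and> (f ^^ k) x = x)"
  have k: "0 < k" "(f ^^ k) x = x"
    using LeastI_ex[OF \<open>\<exists>k. _\<close>] unfolding k_def by blast+
  have "inj_on (\<lambda>i. (f ^^ i) x) {0..<k}"
    by (rule inj_on_funpow_least[OF k(2)]) (use not_less_Least in \<open>auto simp: k_def\<close>)
  then show ?thesis
    using that k by (simp add: atLeast0LessThan)
qed

locale two_perfect_matchings =
  fixes blk :: "'a \<Rightarrow> bool" and V :: "'a set" and E M M' :: "'a set set"
  assumes finite_V: "finite V" and bipartite: "bipartite_colouring blk V E"
    and matching: "perfect_matching V E M" and matching': "perfect_matching V E M'"
begin

definition alt_succ :: "'a \<Rightarrow> 'a" where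
  "alt_succ = mate M' \<circ> mate M"

lemma inj_alt_succ: "inj alt_succ"
  unfolding alt_succ_def
  using inj_mate[OF matching' bipartite] inj_mate[OF matching bipartite] by (rule inj_compose)

lemma alt_succ_in_V: "x \<in> V \<Longrightarrow> alt_succ x \<in> V"
  and alt_succ_colour: "x \<in> V \<Longrightarrow> blk (alt_succ x) = blk x"
  using mate_edge[OF matching bipartite] mate_edge[OF matching' bipartite]
  by (auto simp: alt_succ_def)

lemma funpow_alt_succ:
  assumes "x \<in> V"
  shows "(alt_succ ^^ i) x \<in> V \<and> blk ((alt_succ ^^ i) x) = blk x"
  by (induction i) (simp_all add: assms alt_succ_in_V alt_succ_colour)

lemma alt_succ_fixed_iff:
  assumes "x \<in> V"
  shows "alt_succ x = x \<longleftrightarrow> {x, mate M x} \<in> M'"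
proof
  assume "alt_succ x = x"
  then have "mate M x = mate M' x"
    using mate_mate[OF matching' bipartite] by (metis alt_succ_def comp_apply)
  then show "{x, mate M x} \<in> M'"
    using mate_edge(1)[OF matching' bipartite assms] by simp
next
  assume "{x, mate M x} \<in> M'"
  then have "mate M' x = mate M x"
    by (rule mate_eqI[OF matching' bipartite assms])
  then show "alt_succ x = x"
    using mate_mate[OF matching' bipartite] by (metis alt_succ_def comp_apply)
qed

definition alt_walk :: "'a \<Rightarrow> nat \<Rightarrow> 'a" where
  "alt_walk v j =
     (if even j then (alt_succ ^^ (j div 2)) v else mate M ((alt_succ ^^ (j div 2)) v))"

lemma alt_walk_Suc:
  "alt_walk v (Suc j) = (if even j then mate M (alt_walk v j) else mate M' (alt_walk v j))"
proof (cases "even j")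
  case False
  then have "Suc j div 2 = Suc (j div 2)"
    by presburger
  then show ?thesis
    using False by (simp add: alt_walk_def alt_succ_def)
qed (simp add: alt_walk_def)

context
  fixes v assumes v: "v \<in> V"
begin

lemma alt_walk_in_V: "alt_walk v j \<in> V"
  using funpow_alt_succ[OF v] mate_edge(2)[OF matching bipartite] by (simp add: alt_walk_def)

lemma alt_walk_colour: "blk (alt_walk v j) \<longleftrightarrow> (blk v \<longleftrightarrow> even j)"
  using funpow_alt_succ[OF v] mate_edge(3)[OF matching bipartite] by (auto simp: alt_walk_def)

lemma alt_walk_edge:
  "{alt_walk v j, alt_walk v (Suc j)} \<in> (if even j then M else M')"
  using mate_edge(1)[OF matching bipartite alt_walk_in_V] mate_edge(1)[OF matching' bipartite alt_walk_in_V]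
  by (simp add: alt_walk_Suc)

lemma alt_walk_edge_not_in_M':
  assumes "{v, mate M v} \<notin> M'" "even j"
  shows "{alt_walk v j, alt_walk v (Suc j)} \<notin> M'"
proof
  let ?x = "(alt_succ ^^ (j div 2)) v"
  assume "{alt_walk v j, alt_walk v (Suc j)} \<in> M'"
  then have "alt_succ ?x = ?x"
    using assms(2) alt_succ_fixed_iff funpow_alt_succ[OF v] by (simp add: alt_walk_Suc alt_walk_def)
  then have "(alt_succ ^^ (j div 2)) (alt_succ v) = (alt_succ ^^ (j div 2)) v"
    by (simp add: funpow_swap1)
  then have "alt_succ v = v"
    using inj_fn[OF inj_alt_succ] by (meson injD)
  then show False
    using assms(1) alt_succ_fixed_iff[OF v] by blast
qed

lemma alt_walk_periodic:
  assumes "(alt_succ ^^ k) v = v"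
  shows "alt_walk v (j + 2 * k) = alt_walk v j"
proof -
  have "(j + 2 * k) div 2 = j div 2 + k"
    by simp
  moreover have "(alt_succ ^^ (j div 2 + k)) v = (alt_succ ^^ (j div 2)) v"
    using assms by (simp only: funpow_add comp_apply)
  ultimately show ?thesis
    unfolding alt_walk_def by (simp add: add.commute)
qed

lemma inj_on_alt_walk:
  assumes "inj_on (\<lambda>i. (alt_succ ^^ i) v) {..<k}"
  shows "inj_on (alt_walk v) {..<2 * k}"
proof (rule inj_onI)
  fix i j assume ij: "i \<in> {..<2 * k}" "j \<in> {..<2 * k}" "alt_walk v i = alt_walk v j"
  then have parity: "even i \<longleftrightarrow> even j"
    using alt_walk_colour by metis
  then have "(alt_succ ^^ (i div 2)) v = (alt_succ ^^ (j div 2)) v"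
    using ij(3) mate_mate[OF matching bipartite] by (auto simp: alt_walk_def split: if_splits) metis
  then have "i div 2 = j div 2"
    using assms ij(1,2) by (auto dest: inj_onD)
  then show "i = j"
    using parity by (metis odd_two_times_div_two_succ dvd_mult_div_cancel)
qed

lemma alt_walk_alternating_cycle:
  assumes "{v, mate M v} \<notin> M'" and k: "1 < k" "(alt_succ ^^ k) v = v"
    and inj: "inj_on (\<lambda>i. (alt_succ ^^ i) v) {..<k}"
  shows "alternating_cycle V E M M' (map (alt_walk v) [0..<2 * k])" (is "alternating_cycle _ _ _ _ ?vs")
proof -
  have edge: "cycle_edge ?vs i = {alt_walk v i, alt_walk v (Suc i)}" if "i < length ?vs" for i
    using that cycle_edge_map_upt alt_walk_periodic[OF k(2), of 0] by simp
  have "is_cycle V E ?vs"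
    unfolding is_cycle_iff
  proof (intro conjI allI impI)
    show "3 \<le> length ?vs"
      using k(1) by simp
    show "distinct ?vs"
      using inj_on_alt_walk[OF inj] by (simp add: distinct_map atLeast0LessThan)
    show "set ?vs \<subseteq> V"
      using alt_walk_in_V by auto
    fix i assume "i < length ?vs"
    then show "cycle_edge ?vs i \<in> E"
      using edge alt_walk_edge[of i] perfect_matching_subset[OF matching]
        perfect_matching_subset[OF matching'] by (auto split: if_splits)
  qed
  moreover have "cycle_edge ?vs i \<in> (if even i then M - M' else M')" if "i < length ?vs" for i
    using edge[OF that] alt_walk_edge[of i] alt_walk_edge_not_in_M'[OF assms(1), of i] by auto
  ultimately show ?thesis
    unfolding alternating_cycle_def by blast
qed

end

lemma alternating_cycle_exists:
  assumes "M \<noteq> M'"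
  obtains vs where "alternating_cycle V E M M' vs" "\<And>i. i < length vs \<Longrightarrow> blk (vs ! i) \<longleftrightarrow> even i"
proof -
  obtain e where e: "e \<in> M" "e \<notin> M'"
    using assms perfect_matching_subset_eq[OF matching matching' bipartite] by blast
  obtain v where v: "v \<in> V" "blk v" "e = {v, mate M v}"
  proof -
    obtain x y where "e = {x, y}" "x \<in> V" "y \<in> V" "blk x \<noteq> blk y"
      using e(1) perfect_matching_subset[OF matching] bipartite
      unfolding bipartite_colouring_def by blast
    then show thesis
      using that e(1) mate_eqI[OF matching bipartite] by (metis insert_commute)
  qed
  have "finite (range (\<lambda>n. (alt_succ ^^ n) v))"
    using finite_V funpow_alt_succ[OF v(1)] by (meson finite_subset image_subsetI)
  then obtain k where k: "0 < k" "(alt_succ ^^ k) v = v" "inj_on (\<lambda>i. (alt_succ ^^ i) v) {..<k}"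
    using inj_funpow_period[OF inj_alt_succ] by blast
  moreover have "k \<noteq> 1"
    using k(2) alt_succ_fixed_iff[OF v(1)] e(2) v(3) by auto
  ultimately have "alternating_cycle V E M M' (map (alt_walk v) [0..<2 * k])"
    using alt_walk_alternating_cycle[OF v(1)] e(2) v(3) by simp
  moreover have "blk (map (alt_walk v) [0..<2 * k] ! i) \<longleftrightarrow> even i" if "i < 2 * k" for i
    using that alt_walk_colour[OF v(1)] v(2) by simp
  ultimately show thesis
    using that[of "map (alt_walk v) [0..<2 * k]"] by simp
qed

end

lemma perfect_matching_forced_by_cuts:
  assumes "finite V" "bipartite_colouring blk V E"
    and cuts: "\<forall>D\<in>\<D>. e_cut blk V E D"
    and nice: "\<forall>vs. nice_cycle V E vs \<longrightarrow> (\<exists>D\<in>\<D>. cycle_edges vs \<inter> D \<noteq> {})"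
    and M: "perfect_matching V E M" and M': "perfect_matching V E M'"
    and agree: "\<Union>\<D> \<inter> M \<subseteq> M'"
  shows "M' = M"
proof (rule ccontr)
  interpret two_perfect_matchings blk V E M M'
    using assms by unfold_locales
  assume "M' \<noteq> M"
  then have "M \<noteq> M'"
    by simp
  then obtain vs where alt: "alternating_cycle V E M M' vs"
    and colour: "\<And>i. i < length vs \<Longrightarrow> blk (vs ! i) \<longleftrightarrow> even i"
    by (rule alternating_cycle_exists) blast
  have cycle: "is_cycle V E vs"
    using alt unfolding alternating_cycle_def by blast
  obtain D where D: "D \<in> \<D>" "cycle_edges vs \<inter> D \<noteq> {}"
    using nice alternating_cycle_nice[OF M alt] by blast
  obtain V1 V2 where V12: "V1 \<union> V2 = V" "V1 \<inter> V2 = {}"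
    and D_eq: "D = {e \<in> E. e \<inter> V1 \<noteq> {} \<and> e \<inter> V2 \<noteq> {}}"
    and oriented: "\<forall>e\<in>D. \<exists>b w. e = {b, w} \<and> b \<in> V1 \<and> w \<in> V2 \<and> blk b \<and> \<not> blk w"
    using cuts D(1) unfolding e_cut_def by meson
  obtain i where i: "i < length vs" "vs ! i \<in> V1" "vs ! ((i + 1) mod length vs) \<in> V2"
    using cycle_crosses_cut[OF cycle V12] D(2) D_eq by blast
  have in_D: "cycle_edge vs i \<in> D"
    using i cycle D_eq unfolding is_cycle_iff cycle_edge_def by blast
  then obtain b w where bw: "cycle_edge vs i = {b, w}" "b \<in> V1" "w \<in> V2" "blk b"
    using oriented by blast
  have "vs ! i \<noteq> w"
    using i(2) bw(3) V12(2) by blast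
  then have "blk (vs ! i)"
    using bw unfolding cycle_edge_def by (auto simp: doubleton_eq_iff)
  then have "cycle_edge vs i \<in> M - M'"
    using colour alt i(1) unfolding alternating_cycle_def by auto
  then show False
    using in_D D(1) agree by blast
qed

section \<open>Hexagonal systems\<close>

lemma cell_edge_bichromatic:
  assumes "e \<in> cell_edges (a, b)"
  shows "\<exists>u w. e = {u, w} \<and> u \<in> cell_verts (a, b) \<and> w \<in> cell_verts (a, b) \<and> black u \<noteq> black w"
proof -
  have edge: "\<exists>u w. {p, q} = {u, w} \<and> u \<in> cell_verts (a, b) \<and> w \<in> cell_verts (a, b) \<and> black u \<noteq> black w"
    if "p \<in> cell_verts (a, b)" "q \<in> cell_verts (a, b)" "black p \<noteq> black q" for p q
    using that by blast
  from assms consider "e = {(a, b), (a + 1, b)}" | "e = {(a + 1, b), (a + 2, b)}"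
    | "e = {(a, b + 1), (a + 1, b + 1)}" | "e = {(a + 1, b + 1), (a + 2, b + 1)}"
    | "e = {(a, b), (a, b + 1)}" | "e = {(a + 2, b), (a + 2, b + 1)}"
    unfolding cell_edges_def by simp metis
  then show ?thesis
    by cases (simp only:, rule edge; simp add: cell_verts_def black_def; presburger)+
qed

lemma hexagonal_system_bipartite:
  assumes "hexagonal_system V E"
  shows "bipartite_colouring black V E"
proof -
  obtain vs where V: "V = \<Union> (cell_verts ` {c. cell_inside vs c})"
    and E: "E = \<Union> (cell_edges ` {c. cell_inside vs c})"
    using assms unfolding hexagonal_system_def by blast
  show ?thesis
    unfolding bipartite_colouring_def V E using cell_edge_bichromatic by fast
qed

lemma hex_edge_crossing:
  assumes "{u, w} \<in> hex_edges" "(snd u \<le> b) \<noteq> (snd w \<le> b)"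
  shows "{u, w} = {(fst u, b), (fst u, b + 1)}"
proof -
  from assms(1) obtain x y where "{u, w} = {(x, y), (x + 1, y)} \<or> {u, w} = {(x, y), (x, y + 1)}"
    unfolding hex_edges_def by blast
  then show ?thesis
    using assms(2) by (auto simp: doubleton_eq_iff)
qed

lemma hex_cycle_crossing_iff:
  assumes cycle: "is_cycle UNIV hex_edges vs" and i: "i < length vs"
  shows "(snd (vs ! i) \<le> b) \<noteq> (snd (vs ! ((i + 1) mod length vs)) \<le> b) \<longleftrightarrow>
    cycle_edge vs i = {(fst (vs ! i), b), (fst (vs ! i), b + 1)}"
proof
  assume "(snd (vs ! i) \<le> b) \<noteq> (snd (vs ! ((i + 1) mod length vs)) \<le> b)"
  then show "cycle_edge vs i = {(fst (vs ! i), b), (fst (vs ! i), b + 1)}"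
    using cycle i hex_edge_crossing unfolding is_cycle_iff cycle_edge_def by blast
next
  assume "cycle_edge vs i = {(fst (vs ! i), b), (fst (vs ! i), b + 1)}"
  then show "(snd (vs ! i) \<le> b) \<noteq> (snd (vs ! ((i + 1) mod length vs)) \<le> b)"
    unfolding cycle_edge_def
    by (auto simp: doubleton_eq_iff) (metis snd_conv order_refl, metis snd_conv not_le less_add_one)
qed

lemma even_card_vertical_crossings:
  assumes cycle: "is_cycle UNIV hex_edges vs"
  shows "even (card {x. {(x, b), (x, b + 1)} \<in> cycle_edges vs})"
proof -
  let ?n = "length vs"
  define A where
    "A = {i. i < ?n \<and> (snd (vs ! i) \<le> b) \<noteq> (snd (vs ! ((i + 1) mod ?n)) \<le> b)}"
  have crossing: "i \<in> A \<longleftrightarrow> cycle_edge vs i = {(fst (vs ! i), b), (fst (vs ! i), b + 1)}"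
    if "i < ?n" for i
    using hex_cycle_crossing_iff[OF cycle that] that unfolding A_def by simp
  have "{x. {(x, b), (x, b + 1)} \<in> cycle_edges vs} = (\<lambda>i. fst (vs ! i)) ` A"
  proof (intro set_eqI iffI)
    fix x assume "x \<in> {x. {(x, b), (x, b + 1)} \<in> cycle_edges vs}"
    then obtain i where i: "i < ?n" "cycle_edge vs i = {(x, b), (x, b + 1)}"
      unfolding cycle_edges_eq by auto
    then have "fst (vs ! i) = x"
      unfolding cycle_edge_def by (auto simp: doubleton_eq_iff)
    moreover from this have "i \<in> A"
      using crossing[OF i(1)] i(2) by simp
    ultimately show "x \<in> (\<lambda>i. fst (vs ! i)) ` A"
      by blast
  next
    fix x assume "x \<in> (\<lambda>i. fst (vs ! i)) ` A"
    then obtain i where i: "i \<in> A" "x = fst (vs ! i)"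
      by blast
    moreover have "i < ?n"
      using i(1) unfolding A_def by simp
    ultimately have "i < ?n" "cycle_edge vs i = {(x, b), (x, b + 1)}"
      using crossing by simp_all
    then have "{(x, b), (x, b + 1)} \<in> cycle_edge vs ` {..<?n}"
      by (metis lessThan_iff rev_image_eqI)
    then show "x \<in> {x. {(x, b), (x, b + 1)} \<in> cycle_edges vs}"
      unfolding cycle_edges_eq by simp
  qed
  moreover have "inj_on (\<lambda>i. fst (vs ! i)) A"
  proof (rule inj_onI)
    fix i j assume ij: "i \<in> A" "j \<in> A" "fst (vs ! i) = fst (vs ! j)"
    moreover have "i < ?n" "j < ?n"
      using ij(1,2) unfolding A_def by simp_all
    ultimately have "cycle_edge vs i = cycle_edge vs j"
      using crossing by simp
    then show "i = j"
      using cycle_edge_inj cycle ij(1,2) unfolding is_cycle_iff A_def by (auto dest: inj_onD)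
  qed
  moreover have "even (card A)"
    unfolding A_def using cycle by (intro even_card_cyclic_true_false_steps) (auto simp: is_cycle_iff)
  ultimately show ?thesis
    by (simp add: card_image)
qed

lemma finite_cells_inside:
  assumes cycle: "is_cycle UNIV hex_edges vs"
  shows "finite {c. cell_inside vs c}"
proof -
  define X where "X = fst ` set vs"
  define Y where "Y = snd ` set vs"
  have finite: "finite X" "finite Y"
    unfolding X_def Y_def by simp_all
  have column: "x \<in> X" "b \<in> Y" if "{(x, b), (x, b + 1)} \<in> cycle_edges vs" for x b
  proof -
    have "(x, b) \<in> set vs"
      using cycle_edges_subset[OF that] by blast
    then show "x \<in> X" "b \<in> Y"
      unfolding X_def Y_def by (auto intro: rev_image_eqI)
  qed
  have "{c. cell_inside vs c} \<subseteq> {Min X - 1 .. Max X} \<times> Y"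
  proof clarify
    fix a b assume "cell_inside vs (a, b)"
    then have odd: "odd (card {a'. a + 1 < a' \<and> {(a', b), (a', b + 1)} \<in> cycle_edges vs})"
      (is "odd (card ?right)")
      unfolding cell_inside_def by simp
    then obtain a' where a': "a + 1 < a'" "{(a', b), (a', b + 1)} \<in> cycle_edges vs"
      by (metis (no_types, lifting) card.empty empty_Collect_eq even_zero)
    then have "a' \<in> X" and b: "b \<in> Y"
      using column by blast+
    then have "a \<le> Max X"
      using a'(1) finite Max_ge[of X a'] by linarith
    moreover have "Min X - 1 \<le> a"
    proof (rule ccontr)
      assume "\<not> Min X - 1 \<le> a"
      then have "?right = {x. {(x, b), (x, b + 1)} \<in> cycle_edges vs}"
      proof (intro Collect_cong)
        fix x
        show "a + 1 < x \<and> {(x, b), (x, b + 1)} \<in> cycle_edges vs \<longleftrightarrow> {(x, b), (x, b + 1)} \<in> cycle_edges vs"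
          using column(1)[of x b] Min_le[OF finite(1), of x] \<open>\<not> Min X - 1 \<le> a\<close> by auto
      qed
      then show False
        using odd even_card_vertical_crossings[OF cycle] by simp
    qed
    ultimately show "a \<in> {Min X - 1 .. Max X} \<and> b \<in> Y"
      using b by simp
  qed
  then show ?thesis
    using finite finite_subset by blast
qed

lemma hexagonal_system_finite:
  assumes "hexagonal_system V E"
  shows "finite V"
proof -
  obtain vs where "is_cycle UNIV hex_edges vs" "V = \<Union> (cell_verts ` {c. cell_inside vs c})"
    using assms unfolding hexagonal_system_def by blast
  moreover have "finite (cell_verts c)" for c
    unfolding cell_verts_def by (simp split: prod.splits)
  ultimately show ?thesis
    using finite_cells_inside by blast
qed

theorem mainTheorem3:
  fixes V :: "(int \<times> int) set" and E :: "(int \<times> int) set set"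
    and \<D> :: "(int \<times> int) set set set"
  assumes "hexagonal_system V E"
    and "\<exists>M. perfect_matching V E M"
    and "finite \<D>"
    and "\<forall>D\<in>\<D>. e_cut black V E D"
    and "\<forall>vs. nice_cycle V E vs \<longrightarrow> (\<exists>D\<in>\<D>. cycle_edges vs \<inter> D \<noteq> {})"
  shows "complete_forcing_set V E (\<Union>\<D>)"
proof -
  have "\<Union>\<D> \<subseteq> E"
    using assms(4) unfolding e_cut_def by blast
  moreover have "M' = M" if "perfect_matching V E M" "perfect_matching V E M'" "\<Union>\<D> \<inter> M \<subseteq> M'"
    for M M'
    using perfect_matching_forced_by_cuts[OF hexagonal_system_finite hexagonal_system_bipartite]
      assms(1,4,5) that by blast
  ultimately show ?thesis
    unfolding complete_forcing_set_def forcing_set_def by blast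
qed

end
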